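(* Let $k\ge1$, let $l\le m$ be positive integers, and let $P$ be a polynomial with $P(m)>0$. Let $S_{l,P(m)}=\{A\in M_l : |\mathcal{V}(X\otimes Y=A)|>P(m)\}$. Then $|S_{l,P(m)}|\le \dfrac{m^{k^2+1}}{P(m)}\,|M_l|$.
   Context: Max-times product on $\mathrm{Mat}_k(\mathbb{Z}_{\geq 1})$: $(X\otimes Y)_{ij}=\max_{1\le l\le k}(x_{il}\cdot y_{lj})$. For $a\ge1$, $\mathrm{size}_2(a)=\lfloor\log_2 a\rfloor+1$; for a $k\times k$ matrix $A$, $\mathrm{size}_2(A)=\sum_{i,j}\mathrm{size}_2(a_{ij})+k^2-1$. $M_l=\{A\in\mathrm{Mat}_k(\mathbb{Z}_{\geq 1}) : \mathrm{size}_2(A)=l\}$. For $A\in\mathrm{Mat}_k(\mathbb{Z}_{\geq 1})$, $\mathcal{V}(X\otimes Y=A)$ is the set of pairs $(X,Y)\in\mathrm{Mat}_k(\mathbb{Z}_{\geq 1})^2$ with $X\otimes Y=A$. *)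

theory Defs
  imports Complex_Main "HOL-Computational_Algebra.Polynomial"
begin

text \<open>k x k matrices with positive integer entries, represented as functions
  nat => nat => nat, with indices 0..k-1 and value 0 outside the index range
  (so that each matrix has a unique representation).\<close>
definition mat_pos :: "nat \<Rightarrow> (nat \<Rightarrow> nat \<Rightarrow> nat) set" where
  "mat_pos k = {A. (\<forall>i<k. \<forall>j<k. 1 \<le> A i j) \<and> (\<forall>i j. \<not> (i < k \<and> j < k) \<longrightarrow> A i j = 0)}"

definition maxtimes :: "nat \<Rightarrow> (nat \<Rightarrow> nat \<Rightarrow> nat) \<Rightarrow> (nat \<Rightarrow> nat \<Rightarrow> nat) \<Rightarrow> (nat \<Rightarrow> nat \<Rightarrow> nat)" where
  "maxtimes k X Y = (\<lambda>i j. if i < k \<and> j < k then Max {X i l * Y l j | l. l < k} else 0)"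

definition size2 :: "nat \<Rightarrow> nat" where
  "size2 a = nat \<lfloor>log 2 (real a)\<rfloor> + 1"

definition size2_mat :: "nat \<Rightarrow> (nat \<Rightarrow> nat \<Rightarrow> nat) \<Rightarrow> nat" where
  "size2_mat k A = (\<Sum>i<k. \<Sum>j<k. size2 (A i j)) + k^2 - 1"

definition Ml :: "nat \<Rightarrow> nat \<Rightarrow> (nat \<Rightarrow> nat \<Rightarrow> nat) set" where
  "Ml k l = {A \<in> mat_pos k. size2_mat k A = l}"

definition Vsol :: "nat \<Rightarrow> (nat \<Rightarrow> nat \<Rightarrow> nat) \<Rightarrow> ((nat \<Rightarrow> nat \<Rightarrow> nat) \<times> (nat \<Rightarrow> nat \<Rightarrow> nat)) set" where
  "Vsol k A = {(X, Y). X \<in> mat_pos k \<and> Y \<in> mat_pos k \<and> maxtimes k X Y = A}"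

definition Sset :: "nat \<Rightarrow> nat \<Rightarrow> real \<Rightarrow> (nat \<Rightarrow> nat \<Rightarrow> nat) set" where
  "Sset k l c = {A \<in> Ml k l. real (card (Vsol k A)) > c}"

end

theory Submission
  imports Defs "HOL-Library.FuncSet"
begin

text \<open>Every solution \<open>(X, Y)\<close> of \<open>X \<otimes> Y = A\<close> with \<open>A \<in> M\<^sub>l\<close>, \<open>l \<le> m\<close>, is encoded
  injectively by a matrix in \<open>M\<^sub>l\<close> together with \<open>k\<^sup>2\<close> numbers in \<open>[1, m]\<close> and one in \<open>[0, m)\<close>.
  Pair \<open>x\<^sub>i\<^sub>s\<close> with \<open>y\<^sub>s\<^sub>j\<close> for \<open>s = (i + j) mod k\<close>, so that every entry of \<open>X\<close> and of \<open>Y\<close> is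
  used exactly once, and concatenate the binary digits of \<open>x\<^sub>i\<^sub>s\<close> with those of \<open>y\<^sub>s\<^sub>j\<close> minus
  its leading one. The result is at most \<open>x\<^sub>i\<^sub>s y\<^sub>s\<^sub>j \<le> a\<^sub>i\<^sub>j\<close>, so this matrix has size at
  most \<open>l\<close>; multiplying its corner entry by \<open>2\<^sup>d\<close>, \<open>d < m\<close> the size deficit, puts it into \<open>M\<^sub>l\<close>.
  Knowing \<open>d\<close> and the bit lengths of the \<open>y\<^sub>s\<^sub>j\<close>, all entries of \<open>X\<close> and \<open>Y\<close> can be read off.
  Hence the numbers of solutions, summed over \<open>M\<^sub>l\<close>, are at most \<open>m ^ (k\<^sup>2 + 1) |M\<^sub>l|\<close>, and
  the theorem is Markov's inequality.\<close>

type_synonym mat = "nat \<Rightarrow> nat \<Rightarrow> nat"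

lemma size2_eqI:
  assumes "1 \<le> s" "2 ^ (s - 1) \<le> a" "a < 2 ^ s"
  shows "size2 a = s"
proof -
  have "\<lfloor>log (real (2::nat)) (real a)\<rfloor> = int (s - 1)"
    using floor_log_nat_eq_if[of 2 "s - 1" a] assms by simp
  then show ?thesis
    using assms unfolding size2_def by simp
qed

lemma size2_ge_1: "1 \<le> size2 a"
  unfolding size2_def by simp

lemma size2_bounds:
  assumes "1 \<le> a"
  shows "2 ^ (size2 a - 1) \<le> a" and "a < 2 ^ size2 a"
proof -
  have "0 \<le> log 2 (real a)"
    using assms by simp
  then obtain n :: nat where n: "\<lfloor>log 2 (real a)\<rfloor> = int n"
    by (metis zero_le_floor nonneg_int_cases)
  then have "2 ^ n \<le> a \<and> a < 2 ^ (n + 1)"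
    using floor_log_nat_eq_powr_iff[of 2 a n] assms by simp
  moreover have "size2 a = n + 1"
    unfolding size2_def using n by simp
  ultimately show "2 ^ (size2 a - 1) \<le> a" and "a < 2 ^ size2 a"
    by simp_all
qed

lemma size2_mono:
  assumes "1 \<le> a" "a \<le> b"
  shows "size2 a \<le> size2 b"
proof -
  have "(2::nat) ^ (size2 a - 1) < 2 ^ size2 b"
    using size2_bounds(1)[OF assms(1)] size2_bounds(2)[of b] assms by linarith
  then show ?thesis
    using power_less_imp_less_exp by fastforce
qed

lemma size2_mult_power2:
  assumes "1 \<le> b"
  shows "size2 (b * 2 ^ d) = size2 b + d"
proof (rule size2_eqI)
  show "2 ^ (size2 b + d - 1) \<le> b * 2 ^ d"
    using size2_bounds(1)[OF assms] size2_ge_1[of b]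
    by (metis Nat.add_diff_assoc2 mult_le_mono1 power_add)
  show "b * 2 ^ d < 2 ^ (size2 b + d)"
    using size2_bounds(2)[OF assms] by (simp add: power_add)
qed (use size2_ge_1[of b] in simp)

definition bin_concat :: "nat \<Rightarrow> nat \<Rightarrow> nat" where
  "bin_concat x y = x * 2 ^ (size2 y - 1) + (y - 2 ^ (size2 y - 1))"

lemma bin_concat_ge_1: "1 \<le> x \<Longrightarrow> 1 \<le> bin_concat x y"
  unfolding bin_concat_def by (simp add: Suc_le_eq)

lemma bin_concat_le_mult:
  assumes "1 \<le> x" "1 \<le> y"
  shows "bin_concat x y \<le> x * y"
proof -
  define p :: nat where "p = 2 ^ (size2 y - 1)"
  have "p \<le> y"
    using size2_bounds(1)[OF assms(2)] unfolding p_def .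
  have "bin_concat x y = x * p + (y - p)"
    unfolding bin_concat_def p_def ..
  also have "\<dots> \<le> x * p + x * (y - p)"
    using assms(1) by simp
  also have "\<dots> = x * y"
    using \<open>p \<le> y\<close> by (simp add: diff_mult_distrib2)
  finally show ?thesis .
qed

lemma bin_concat_inject:
  assumes "1 \<le> y1" "1 \<le> y2" "size2 y1 = size2 y2" "bin_concat x1 y1 = bin_concat x2 y2"
  shows "x1 = x2" and "y1 = y2"
proof -
  define p :: nat where "p = 2 ^ (size2 y1 - 1)"
  have "2 ^ size2 y1 = 2 * p"
    using size2_ge_1[of y1] unfolding p_def by (metis Suc_diff_le diff_Suc_1 power_Suc)
  then have p_le: "p \<le> y1" "p \<le> y2" and rest_less: "y1 - p < p" "y2 - p < p"
    using size2_bounds[OF assms(1)] size2_bounds[OF assms(2)] assms(3)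
    unfolding p_def by auto
  have eq: "x1 * p + (y1 - p) = x2 * p + (y2 - p)"
    using assms(3,4) unfolding bin_concat_def p_def by simp
  have "(x1 * p + (y1 - p)) div p = x1" "(x2 * p + (y2 - p)) div p = x2"
    using rest_less by simp_all
  with eq show "x1 = x2" by simp
  with eq p_le show "y1 = y2" by simp
qed

lemma mat_pos_eqI:
  assumes "A \<in> mat_pos k" "B \<in> mat_pos k" "\<And>i j. i < k \<Longrightarrow> j < k \<Longrightarrow> A i j = B i j"
  shows "A = B"
proof (intro ext)
  fix i j
  show "A i j = B i j"
    using assms unfolding mat_pos_def by (cases "i < k \<and> j < k") auto
qed

lemma finite_mat_bounded:
  "finite {A :: mat. \<forall>i j. A i j < b \<and> (\<not> (i < k \<and> j < k) \<longrightarrow> A i j = 0)}"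
proof -
  define R where "R = {r :: nat \<Rightarrow> nat. \<forall>j. (j \<in> {..<k} \<longrightarrow> r j \<in> {..<b}) \<and> (j \<notin> {..<k} \<longrightarrow> r j = 0)}"
  have "finite R"
    unfolding R_def by (intro finite_set_of_finite_funs) auto
  then have "finite {A :: mat. \<forall>i. (i \<in> {..<k} \<longrightarrow> A i \<in> R) \<and> (i \<notin> {..<k} \<longrightarrow> A i = (\<lambda>_. 0))}"
    by (intro finite_set_of_finite_funs) auto
  then show ?thesis
    by (rule finite_subset[rotated]) (auto simp: R_def)
qed

lemma maxtimes_ge_mult:
  assumes "i < k" "j < k" "l < k"
  shows "X i l * Y l j \<le> maxtimes k X Y i j"
proof -
  have "finite {X i l * Y l j | l. l < k}"
    by simp
  then show ?thesis
    unfolding maxtimes_def using assms by (auto intro: Max_ge)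
qed

lemma size2_entry_le_size2_mat:
  assumes "i < k" "j < k"
  shows "size2 (A i j) \<le> size2_mat k A"
proof -
  have "size2 (A i j) \<le> (\<Sum>j<k. size2 (A i j))"
    using assms by (intro member_le_sum) auto
  also have "\<dots> \<le> (\<Sum>i<k. \<Sum>j<k. size2 (A i j))"
    using assms by (intro member_le_sum[where f = "\<lambda>i. \<Sum>j<k. size2 (A i j)"]) auto
  moreover have "1 \<le> k ^ 2"
    using assms by simp
  ultimately show ?thesis
    unfolding size2_mat_def by linarith
qed

lemma size2_mat_ge_1: "1 \<le> k \<Longrightarrow> 1 \<le> size2_mat k A"
  using size2_entry_le_size2_mat[of 0 k 0 A] size2_ge_1[of "A 0 0"] by simp

lemma size2_mat_mono:
  assumes "\<And>i j. i < k \<Longrightarrow> j < k \<Longrightarrow> 1 \<le> B i j \<and> B i j \<le> A i j"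
  shows "size2_mat k B \<le> size2_mat k A"
proof -
  have "(\<Sum>i<k. \<Sum>j<k. size2 (B i j)) \<le> (\<Sum>i<k. \<Sum>j<k. size2 (A i j))"
    using assms by (intro sum_mono) (simp add: size2_mono)
  then show ?thesis
    unfolding size2_mat_def by (intro diff_le_mono add_right_mono)
qed

definition shift_corner :: "mat \<Rightarrow> nat \<Rightarrow> mat" where
  "shift_corner B d = (\<lambda>i j. if i = 0 \<and> j = 0 then B i j * 2 ^ d else B i j)"

lemma shift_corner_inject:
  assumes "shift_corner B d = shift_corner B' d"
  shows "B = B'"
proof (intro ext)
  fix i j
  have "shift_corner B d i j = shift_corner B' d i j"
    using assms by simp
  then show "B i j = B' i j"
    unfolding shift_corner_def by (auto split: if_splits)
qed

lemma shift_corner_mem_mat_pos: "B \<in> mat_pos k \<Longrightarrow> shift_corner B d \<in> mat_pos k"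
  unfolding mat_pos_def shift_corner_def by (auto simp: one_le_mult_iff)

lemma size2_mat_shift_corner:
  assumes "1 \<le> k" "1 \<le> B 0 0"
  shows "size2_mat k (shift_corner B d) = size2_mat k B + d"
proof -
  have row: "(\<Sum>j<k. size2 (shift_corner B d i j)) = (\<Sum>j<k. size2 (B i j)) + (if i = 0 then d else 0)" for i
  proof (cases "i = 0")
    case True
    have "(\<Sum>j<k. size2 (shift_corner B d i j)) = (\<Sum>j<k. size2 (B i j) + (if j = 0 then d else 0))"
      using True assms by (intro sum.cong) (auto simp: shift_corner_def size2_mult_power2)
    then show ?thesis
      using True assms by (simp add: sum.distrib)
  qed (simp add: shift_corner_def)
  have "(\<Sum>i<k. \<Sum>j<k. size2 (shift_corner B d i j)) = (\<Sum>i<k. \<Sum>j<k. size2 (B i j)) + d"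
    using assms by (simp add: row sum.distrib)
  moreover have "1 \<le> k ^ 2"
    using assms(1) by simp
  ultimately show ?thesis
    unfolding size2_mat_def by simp
qed

definition latin :: "nat \<Rightarrow> nat \<Rightarrow> nat \<Rightarrow> nat" where
  "latin k i j = (i + j) mod k"

lemma latin_less: "i < k \<Longrightarrow> latin k i j < k"
  unfolding latin_def by simp

lemma latin_row_onto: "i < k \<Longrightarrow> l < k \<Longrightarrow> \<exists>j<k. latin k i j = l"
  by (rule exI[of _ "(l + k - i) mod k"]) (simp add: latin_def mod_add_right_eq)

lemma latin_col_onto: "j < k \<Longrightarrow> l < k \<Longrightarrow> \<exists>i<k. latin k i j = l"
  by (rule exI[of _ "(l + k - j) mod k"]) (simp add: latin_def mod_add_left_eq)

definition interleave :: "nat \<Rightarrow> mat \<Rightarrow> mat \<Rightarrow> mat" where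
  "interleave k X Y = (\<lambda>i j. if i < k \<and> j < k then bin_concat (X i (latin k i j)) (Y (latin k i j) j) else 0)"

definition factor_sizes :: "nat \<Rightarrow> mat \<Rightarrow> nat \<times> nat \<Rightarrow> nat" where
  "factor_sizes k Y = restrict (\<lambda>(i, j). size2 (Y (latin k i j) j)) ({..<k} \<times> {..<k})"

lemma interleave_mem_mat_pos:
  assumes "X \<in> mat_pos k"
  shows "interleave k X Y \<in> mat_pos k"
proof -
  have "1 \<le> interleave k X Y i j" if "i < k" "j < k" for i j
  proof -
    have "1 \<le> X i (latin k i j)"
      using assms latin_less[OF that(1)] that unfolding mat_pos_def by simp
    then show ?thesis
      using that unfolding interleave_def by (simp only: if_True bin_concat_ge_1 conj_absorb)
  qed
  then show ?thesis
    unfolding mat_pos_def interleave_def by auto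
qed

lemma interleave_le_maxtimes:
  assumes "X \<in> mat_pos k" "Y \<in> mat_pos k" "i < k" "j < k"
  shows "interleave k X Y i j \<le> maxtimes k X Y i j"
proof -
  let ?l = "latin k i j"
  have "?l < k"
    using assms(3) by (rule latin_less)
  then have "1 \<le> X i ?l" "1 \<le> Y ?l j"
    using assms unfolding mat_pos_def by auto
  then have "interleave k X Y i j \<le> X i ?l * Y ?l j"
    using assms(3,4) unfolding interleave_def by (simp add: bin_concat_le_mult)
  also have "\<dots> \<le> maxtimes k X Y i j"
    using assms(3,4) \<open>?l < k\<close> by (rule maxtimes_ge_mult)
  finally show ?thesis .
qed

lemma size2_factor_le_size2_mat_maxtimes:
  assumes "X \<in> mat_pos k" "Y \<in> mat_pos k" "i < k" "j < k"
  shows "size2 (Y (latin k i j) j) \<le> size2_mat k (maxtimes k X Y)"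
proof -
  let ?l = "latin k i j"
  have "?l < k"
    using assms(3) by (rule latin_less)
  then have "1 \<le> X i ?l" "1 \<le> Y ?l j"
    using assms unfolding mat_pos_def by auto
  then have "Y ?l j \<le> X i ?l * Y ?l j"
    by simp
  also have "\<dots> \<le> maxtimes k X Y i j"
    using assms(3,4) \<open>?l < k\<close> by (rule maxtimes_ge_mult)
  finally have "Y ?l j \<le> maxtimes k X Y i j" .
  then have "size2 (Y ?l j) \<le> size2 (maxtimes k X Y i j)"
    by (rule size2_mono[OF \<open>1 \<le> Y ?l j\<close>])
  also have "\<dots> \<le> size2_mat k (maxtimes k X Y)"
    using assms(3,4) by (rule size2_entry_le_size2_mat)
  finally show ?thesis .
qed

lemma interleave_inject:
  assumes "X \<in> mat_pos k" "Y \<in> mat_pos k" "X' \<in> mat_pos k" "Y' \<in> mat_pos k"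
    and "interleave k X Y = interleave k X' Y'" and "factor_sizes k Y = factor_sizes k Y'"
  shows "X = X'" and "Y = Y'"
proof -
  have entries: "X i (latin k i j) = X' i (latin k i j) \<and> Y (latin k i j) j = Y' (latin k i j) j"
    if "i < k" "j < k" for i j
  proof -
    let ?l = "latin k i j"
    have "?l < k"
      using that(1) by (rule latin_less)
    then have "1 \<le> Y ?l j" "1 \<le> Y' ?l j"
      using assms that unfolding mat_pos_def by auto
    moreover have "size2 (Y ?l j) = size2 (Y' ?l j)"
      using fun_cong[OF assms(6), of "(i, j)"] that unfolding factor_sizes_def by simp
    moreover have "bin_concat (X i ?l) (Y ?l j) = bin_concat (X' i ?l) (Y' ?l j)"
      using fun_cong[OF fun_cong[OF assms(5)], of i j] that unfolding interleave_def by simp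
    ultimately show ?thesis
      using bin_concat_inject by blast
  qed
  show "X = X'"
    using assms(1,3) by (rule mat_pos_eqI) (metis entries latin_row_onto)
  show "Y = Y'"
    using assms(2,4) by (rule mat_pos_eqI) (metis entries latin_col_onto)
qed

definition solution_code :: "nat \<Rightarrow> mat \<times> mat \<times> mat \<Rightarrow> mat \<times> (nat \<times> nat \<Rightarrow> nat) \<times> nat" where
  "solution_code k = (\<lambda>(A, X, Y).
     let B = interleave k X Y; d = size2_mat k A - size2_mat k B
     in (shift_corner B d, factor_sizes k Y, d))"

lemma solution_code_mem:
  assumes "1 \<le> k" "l \<le> m" "p \<in> Sigma (Ml k l) (Vsol k)"
  shows "solution_code k p \<in> Ml k l \<times> (({..<k} \<times> {..<k}) \<rightarrow>\<^sub>E {1..m}) \<times> {..<m}"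
proof -
  obtain A X Y where p: "p = (A, X, Y)"
    by (cases p) auto
  have X: "X \<in> mat_pos k" and Y: "Y \<in> mat_pos k" and A: "maxtimes k X Y = A"
    using assms(3) unfolding p Vsol_def by auto
  have size_A: "size2_mat k A = l"
    using assms(3) unfolding p Ml_def by simp
  define B where "B = interleave k X Y"
  define d where "d = size2_mat k A - size2_mat k B"
  have B: "B \<in> mat_pos k"
    unfolding B_def using X by (rule interleave_mem_mat_pos)
  then have "1 \<le> B 0 0"
    using assms(1) unfolding mat_pos_def by simp
  have "size2_mat k B \<le> size2_mat k A"
    using B interleave_le_maxtimes[OF X Y] A unfolding B_def mat_pos_def
    by (intro size2_mat_mono) auto
  then have "size2_mat k (shift_corner B d) = size2_mat k A"
    using size2_mat_shift_corner[of k B d, OF assms(1) \<open>1 \<le> B 0 0\<close>] unfolding d_def by simp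
  then have "shift_corner B d \<in> Ml k l"
    using shift_corner_mem_mat_pos[OF B] size_A unfolding Ml_def by simp
  moreover have "d < m"
    using size2_mat_ge_1[OF assms(1), of B] size2_mat_ge_1[OF assms(1), of A] size_A assms(2)
    unfolding d_def by linarith
  moreover have "factor_sizes k Y \<in> ({..<k} \<times> {..<k}) \<rightarrow>\<^sub>E {1..m}"
  proof -
    have "size2 (Y (latin k i j) j) \<in> {1..m}" if "i < k" "j < k" for i j
      using size2_factor_le_size2_mat_maxtimes[OF X Y that] size2_ge_1[of "Y (latin k i j) j"]
        A size_A assms(2) by simp
    then show ?thesis
      unfolding factor_sizes_def by auto
  qed
  ultimately show ?thesis
    unfolding p solution_code_def Let_def B_def d_def by simp
qed

lemma solution_code_inj: "inj_on (solution_code k) (Sigma (Ml k l) (Vsol k))"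
proof (rule inj_onI)
  fix p p' assume p: "p \<in> Sigma (Ml k l) (Vsol k)" and p': "p' \<in> Sigma (Ml k l) (Vsol k)"
    and code: "solution_code k p = solution_code k p'"
  obtain A X Y A' X' Y' where eqs: "p = (A, X, Y)" "p' = (A', X', Y')"
    by (cases p, cases p') auto
  have sol: "X \<in> mat_pos k" "Y \<in> mat_pos k" "maxtimes k X Y = A"
    "X' \<in> mat_pos k" "Y' \<in> mat_pos k" "maxtimes k X' Y' = A'"
    using p p' unfolding eqs Vsol_def by auto
  obtain d where shifted: "shift_corner (interleave k X Y) d = shift_corner (interleave k X' Y') d"
    and sizes: "factor_sizes k Y = factor_sizes k Y'"
    using code unfolding eqs solution_code_def Let_def by auto
  from shifted have "interleave k X Y = interleave k X' Y'"
    by (rule shift_corner_inject)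
  with sol sizes have "X = X'" "Y = Y'"
    using interleave_inject by blast+
  with sol show "p = p'"
    unfolding eqs by simp
qed

lemma finite_Ml: "finite (Ml k l)"
proof (rule finite_subset[OF _ finite_mat_bounded])
  show "Ml k l \<subseteq> {A. \<forall>i j. A i j < 2 ^ l \<and> (\<not> (i < k \<and> j < k) \<longrightarrow> A i j = 0)}"
  proof (intro subsetI CollectI allI conjI impI)
    fix A i j assume A: "A \<in> Ml k l"
    show "A i j = 0" if "\<not> (i < k \<and> j < k)"
      using A that unfolding Ml_def mat_pos_def by auto
    show "A i j < 2 ^ l"
    proof (cases "i < k \<and> j < k")
      case True
      then have "1 \<le> A i j"
        using A unfolding Ml_def mat_pos_def by auto
      then have "A i j < 2 ^ size2 (A i j)"
        by (rule size2_bounds)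
      also have "\<dots> \<le> 2 ^ l"
        using size2_entry_le_size2_mat[of i k j A] True A unfolding Ml_def by simp
      finally show ?thesis .
    qed (use A in \<open>auto simp: Ml_def mat_pos_def\<close>)
  qed
qed

lemma sum_card_Vsol_le:
  assumes "1 \<le> k" "l \<le> m"
  shows "(\<Sum>A\<in>Ml k l. card (Vsol k A)) \<le> m ^ (k\<^sup>2 + 1) * card (Ml k l)"
proof -
  let ?Codes = "Ml k l \<times> (({..<k} \<times> {..<k}) \<rightarrow>\<^sub>E {1..m}) \<times> {..<m}"
  have codes: "solution_code k ` Sigma (Ml k l) (Vsol k) \<subseteq> ?Codes"
    using solution_code_mem[OF assms] by (rule image_subsetI)
  have "finite ?Codes"
    using finite_Ml by (intro finite_cartesian_product finite_PiE) auto
  with codes have "finite (solution_code k ` Sigma (Ml k l) (Vsol k))"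
    by (rule finite_subset)
  then have finite_sols: "finite (Sigma (Ml k l) (Vsol k))"
    using solution_code_inj by (rule finite_imageD)
  have "finite (Vsol k A)" if "A \<in> Ml k l" for A
  proof -
    have "finite ({A} \<times> Vsol k A)"
      using that by (intro finite_subset[OF _ finite_sols]) auto
    then show ?thesis
      by (rule finite_cartesian_productD2) simp
  qed
  then have "(\<Sum>A\<in>Ml k l. card (Vsol k A)) = card (Sigma (Ml k l) (Vsol k))"
    using finite_Ml by simp
  also have "\<dots> \<le> card ?Codes"
    using card_inj_on_le[OF solution_code_inj codes \<open>finite ?Codes\<close>] .
  also have "\<dots> = m ^ (k\<^sup>2 + 1) * card (Ml k l)"
    by (simp add: card_cartesian_product card_PiE power2_eq_square)
  finally show ?thesis .
qed

lemma card_gt_le_sum_div: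
  fixes f :: "'a \<Rightarrow> real"
  assumes "finite M" "0 < c" "\<And>x. x \<in> M \<Longrightarrow> 0 \<le> f x"
  shows "real (card {x \<in> M. c < f x}) \<le> (\<Sum>x\<in>M. f x) / c"
proof -
  have "real (card {x \<in> M. c < f x}) * c = (\<Sum>x\<in>{x \<in> M. c < f x}. c)"
    by simp
  also have "\<dots> \<le> (\<Sum>x\<in>{x \<in> M. c < f x}. f x)"
    by (intro sum_mono) simp
  also have "\<dots> \<le> (\<Sum>x\<in>M. f x)"
    using assms by (intro sum_mono2) auto
  finally show ?thesis
    using assms(2) by (simp add: pos_le_divide_eq)
qed

theorem mainTheorem15:
  fixes k l m :: nat and P :: "real poly"
  assumes "1 \<le> k" and "1 \<le> l" and "l \<le> m" and "poly P (real m) > 0"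
  shows "real (card (Sset k l (poly P (real m))))
           \<le> real m ^ (k^2 + 1) / poly P (real m) * real (card (Ml k l))"
proof -
  let ?c = "poly P (real m)"
  have "real (card (Sset k l ?c)) \<le> (\<Sum>A\<in>Ml k l. real (card (Vsol k A))) / ?c"
    unfolding Sset_def using finite_Ml assms(4) by (rule card_gt_le_sum_div) simp
  also have "\<dots> \<le> real (m ^ (k\<^sup>2 + 1) * card (Ml k l)) / ?c"
    using sum_card_Vsol_le[OF assms(1,3)] assms(4)
    by (intro divide_right_mono) (simp_all only: of_nat_sum[symmetric] of_nat_le_iff less_imp_le)
  finally show ?thesis
    by simp
qed

end
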